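(* Let $f:\mathbb{R}^d\to\mathbb{R}^d$ be a linear isomorphism having real eigenvalues $\lambda$ and $\mu$ with $\lambda>1$ and $0<\mu<1$. Then $f$ does not satisfy the topological shadowing property.
   Context: Let $(X,d)$ be a metric space and $f:X\to X$ a homeomorphism; $\mathcal{C}^+=\{\epsilon:X\to\mathbb{R}^+ : \epsilon \text{ continuous}\}$. For $\delta\in\mathcal{C}^+$, a sequence $\{x_n\}_{n\in\mathbb{Z}}\subset X$ is a $\delta$-pseudo-orbit of $f$ if $d(f(x_n),x_{n+1})<\delta(f(x_n))$ for every $n\in\mathbb{Z}$. For $\epsilon\in\mathcal{C}^+$, the sequence $\{x_n\}$ is $\epsilon$-shadowed by an orbit if there is $y\in X$ with $d(f^n(y),x_n)<\epsilon(x_n)$ for every $n\in\mathbb{Z}$. The homeomorphism $f$ satisfies the topological shadowing property if for every $\epsilon\in\mathcal{C}^+$ there exists $\delta\in\mathcal{C}^+$ such that every $\delta$-pseudo-orbit is $\epsilon$-shadowed by an orbit. $\mathbb{R}^d$ carries the Euclidean metric. *)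

theory Defs
  imports "HOL-Analysis.Analysis"
begin

definition pos_cont :: "('a::metric_space \<Rightarrow> real) \<Rightarrow> bool" where
  "pos_cont e \<longleftrightarrow> continuous_on UNIV e \<and> (\<forall>x. 0 < e x)"

definition int_iter :: "('a \<Rightarrow> 'a) \<Rightarrow> int \<Rightarrow> 'a \<Rightarrow> 'a" where
  "int_iter f n = (if 0 \<le> n then f ^^ nat n else inv f ^^ nat (- n))"

definition pseudo_orbit :: "('a::metric_space \<Rightarrow> 'a) \<Rightarrow> ('a \<Rightarrow> real) \<Rightarrow> (int \<Rightarrow> 'a) \<Rightarrow> bool" where
  "pseudo_orbit f \<delta> x \<longleftrightarrow> (\<forall>n. dist (f (x n)) (x (n + 1)) < \<delta> (f (x n)))"

definition shadowed :: "('a::metric_space \<Rightarrow> 'a) \<Rightarrow> ('a \<Rightarrow> real) \<Rightarrow> (int \<Rightarrow> 'a) \<Rightarrow> bool" where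
  "shadowed f \<epsilon> x \<longleftrightarrow> (\<exists>y. \<forall>n. dist (int_iter f n y) (x n) < \<epsilon> (x n))"

definition topological_shadowing :: "('a::metric_space \<Rightarrow> 'a) \<Rightarrow> bool" where
  "topological_shadowing f \<longleftrightarrow>
     (\<forall>\<epsilon>. pos_cont \<epsilon> \<longrightarrow>
        (\<exists>\<delta>. pos_cont \<delta> \<and> (\<forall>x. pseudo_orbit f \<delta> x \<longrightarrow> shadowed f \<epsilon> x)))"

end

theory Submission
  imports Defs
begin

text \<open>Let \<open>v\<close>, \<open>w\<close> be unit eigenvectors for \<open>l > 1\<close> and \<open>0 < m < 1\<close>, and take the weight
  \<open>\<epsilon>(x) = (1 + |x|)^(-p)\<close>. Whatever \<open>\<delta>\<close> is, the sequence that rests at the fixed point \<open>0\<close>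
  and at time \<open>0\<close> jumps to a small \<open>e = a v + a w\<close> is a \<open>\<delta>\<close>-pseudo-orbit. A point \<open>y\<close>
  shadowing it must satisfy \<open>f y = e\<close>: along the forward orbit of \<open>e\<close>, which grows like \<open>l^k\<close>,
  the weight decays like \<open>l^(-kp)\<close>, faster than \<open>f\<close> can contract \<open>f y - e\<close> once \<open>p\<close> is
  large. But then the backward orbit of \<open>y\<close> grows like \<open>m^(-k)\<close> along \<open>w\<close>, whereas it has to
  stay within \<open>\<epsilon>(0) = 1\<close> of \<open>0\<close>.\<close>

lemma linear_funpow:
  fixes f :: "'a::real_vector \<Rightarrow> 'a"
  assumes "linear f"
  shows "linear (f ^^ k)"
proof (induction k)
  case 0
  show ?case using linear_id by (simp add: id_def)
next
  case (Suc k)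
  then show ?case using linear_compose[OF Suc assms] by (simp add: o_def)
qed

lemma funpow_eigenvector:
  fixes f :: "'a::real_vector \<Rightarrow> 'a"
  assumes "linear f" "f v = l *\<^sub>R v"
  shows "(f ^^ k) v = (l ^ k) *\<^sub>R v"
  by (induction k) (simp_all add: assms linear_scale[OF assms(1)] mult.commute)

lemma inv_eigenvector:
  fixes f :: "'a::real_vector \<Rightarrow> 'a"
  assumes "linear f" "inj f" "f v = l *\<^sub>R v" "l \<noteq> 0"
  shows "inv f v = inverse l *\<^sub>R v"
proof -
  have "f (inverse l *\<^sub>R v) = v"
    using assms by (simp add: linear_scale)
  then show ?thesis
    by (metis assms(2) inv_f_f)
qed

lemma unit_eigenvector:
  fixes f :: "'a::real_normed_vector \<Rightarrow> 'a"
  assumes "linear f" "v \<noteq> 0" "f v = l *\<^sub>R v"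
  obtains u where "norm u = 1" "f u = l *\<^sub>R u"
proof
  show "norm (v /\<^sub>R norm v) = 1" "f (v /\<^sub>R norm v) = l *\<^sub>R (v /\<^sub>R norm v)"
    using assms by (simp_all add: linear_scale)
qed

lemma norm_funpow_ge:
  fixes f :: "'a::real_normed_vector \<Rightarrow> 'a"
  assumes "0 \<le> B" "\<And>x. B * norm x \<le> norm (f x)"
  shows "B ^ k * norm x \<le> norm ((f ^^ k) x)"
proof (induction k)
  case (Suc k)
  have "B ^ Suc k * norm x \<le> B * norm ((f ^^ k) x)"
    using mult_left_mono[OF Suc assms(1)] by (simp add: mult.assoc)
  also have "\<dots> \<le> norm ((f ^^ Suc k) x)"
    using assms(2) by simp
  finally show ?case .
qed simp

lemma eq_0_if_orbit_decays_faster: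
  fixes f :: "'a::real_normed_vector \<Rightarrow> 'a"
  assumes "\<And>x. B * norm x \<le> norm (f x)" "0 \<le> r" "r < B"
    and "\<And>k. norm ((f ^^ k) u) \<le> C * r ^ k"
  shows "u = 0"
proof -
  have B: "0 < B" using assms(2,3) by linarith
  have "norm u \<le> C * (r / B) ^ k" for k
  proof -
    have "B ^ k * norm u \<le> C * r ^ k"
      using norm_funpow_ge[of B f k u] assms(1,4) B by (meson less_imp_le order_trans)
    then show ?thesis
      using B by (simp add: power_divide field_simps)
  qed
  moreover have "(\<lambda>k. C * (r / B) ^ k) \<longlonglongrightarrow> 0"
    using assms(2,3) B by (intro tendsto_mult_right_zero LIMSEQ_power_zero) auto
  ultimately have "norm u \<le> 0"
    by (intro LIMSEQ_le_const[of "\<lambda>k. C * (r / B) ^ k"]) auto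
  then show ?thesis by simp
qed

lemma norm_scaleR_add_ge:
  fixes v w :: "'a::real_normed_vector"
  assumes "norm v = 1" "norm w = 1"
  shows "\<bar>c\<bar> - \<bar>d\<bar> \<le> norm (c *\<^sub>R v + d *\<^sub>R w)"
  using norm_diff_ineq[of "c *\<^sub>R v" "d *\<^sub>R w"] assms by simp

lemma int_iter_of_nat: "int_iter f (int k) = f ^^ k"
  by (simp add: int_iter_def)

lemma int_iter_uminus_of_nat: "int_iter f (- int k) = inv f ^^ k"
  by (cases "k = 0") (simp_all add: int_iter_def)

definition decay_weight :: "nat \<Rightarrow> 'a::real_normed_vector \<Rightarrow> real" where
  "decay_weight p x = 1 / (1 + norm x) ^ p"

lemma pos_cont_decay_weight: "pos_cont (decay_weight p)"
  unfolding pos_cont_def decay_weight_def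
  by (auto intro!: continuous_intros simp: add_nonneg_eq_0_iff add_pos_nonneg)

lemma decay_weight_0 [simp]: "decay_weight p 0 = 1"
  by (simp add: decay_weight_def)

definition splice_orbit :: "('a \<Rightarrow> 'a) \<Rightarrow> 'a \<Rightarrow> 'a \<Rightarrow> int \<Rightarrow> 'a" where
  "splice_orbit f p e n = (if n \<le> 0 then p else (f ^^ nat (n - 1)) e)"

lemma pseudo_orbit_splice_orbit:
  fixes f :: "'a::metric_space \<Rightarrow> 'a"
  assumes "\<And>x. 0 < \<delta> x" "f p = p" "dist p e < \<delta> p"
  shows "pseudo_orbit f \<delta> (splice_orbit f p e)"
  unfolding pseudo_orbit_def
proof
  fix n :: int
  consider "n < 0" | "n = 0" | "n > 0" by linarith
  then show "dist (f (splice_orbit f p e n)) (splice_orbit f p e (n + 1)) < \<delta> (f (splice_orbit f p e n))"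
  proof cases
    case 3
    then have "nat n = Suc (nat (n - 1))" by simp
    then have "f (splice_orbit f p e n) = splice_orbit f p e (n + 1)"
      using 3 by (simp add: splice_orbit_def)
    then show ?thesis
      using assms(1) by simp
  qed (use assms in \<open>simp_all add: splice_orbit_def\<close>)
qed

lemma shadowing_point_of_splice_orbit:
  assumes "shadowed f \<epsilon> (splice_orbit f p e)"
  obtains y where "\<And>k. dist ((f ^^ k) (f y)) ((f ^^ k) e) < \<epsilon> ((f ^^ k) e)"
    and "\<And>j. dist ((inv f ^^ j) y) p < \<epsilon> p"
proof -
  obtain y where y: "\<And>n. dist (int_iter f n y) (splice_orbit f p e n) < \<epsilon> (splice_orbit f p e n)"
    using assms unfolding shadowed_def by blast
  have "dist ((f ^^ k) (f y)) ((f ^^ k) e) < \<epsilon> ((f ^^ k) e)" for k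
  proof -
    have "int_iter f (int (Suc k)) y = (f ^^ k) (f y)"
      by (simp only: int_iter_of_nat funpow_Suc_right comp_apply)
    moreover have "splice_orbit f p e (int (Suc k)) = (f ^^ k) e"
      by (simp add: splice_orbit_def)
    ultimately show ?thesis
      using y[of "int (Suc k)"] by simp
  qed
  moreover have "dist ((inv f ^^ j) y) p < \<epsilon> p" for j
    using y[of "- int j"] by (simp add: int_iter_uminus_of_nat splice_orbit_def)
  ultimately show thesis
    using that by blast
qed

context
  fixes f :: "'a::euclidean_space \<Rightarrow> 'a" and v w :: 'a and l m :: real
  assumes lin: "linear f" and inj: "inj f"
    and unstable: "f v = l *\<^sub>R v" "norm v = 1" "1 < l"
    and stable: "f w = m *\<^sub>R w" "norm w = 1" "0 < m" "m < 1"
begin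

lemma funpow_saddle:
  "(f ^^ k) (c *\<^sub>R v + d *\<^sub>R w) = (c * l ^ k) *\<^sub>R v + (d * m ^ k) *\<^sub>R w"
  using linear_funpow[OF lin, of k] funpow_eigenvector[OF lin unstable(1)]
    funpow_eigenvector[OF lin stable(1)]
  by (simp add: linear_add linear_scale)

lemma inv_funpow_saddle:
  "(inv f ^^ k) (c *\<^sub>R v + d *\<^sub>R w) = (c / l ^ k) *\<^sub>R v + (d / m ^ k) *\<^sub>R w"
proof -
  have lin_inv: "linear (inv f)"
    using lin inj by (rule eucl.inj_linear_imp_inv_linear)
  have "inv f v = inverse l *\<^sub>R v" "inv f w = inverse m *\<^sub>R w"
    using inv_eigenvector[OF lin inj unstable(1)] inv_eigenvector[OF lin inj stable(1)]
      unstable(3) stable(3)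
    by auto
  then have "(inv f ^^ k) v = inverse l ^ k *\<^sub>R v" "(inv f ^^ k) w = inverse m ^ k *\<^sub>R w"
    using funpow_eigenvector[OF lin_inv] by blast+
  then show ?thesis
    using linear_funpow[OF lin_inv, of k]
    by (simp add: linear_add linear_scale power_inverse divide_inverse)
qed

lemma decay_weight_funpow_saddle_le:
  assumes "0 < a" "a \<le> 1"
  shows "decay_weight p ((f ^^ k) (a *\<^sub>R v + a *\<^sub>R w)) \<le> 1 / a ^ p * (1 / l ^ p) ^ k"
proof -
  have "a * m ^ k \<le> 1"
    using assms stable(3,4) by (simp add: mult_le_one power_le_one)
  moreover have "a * l ^ k - a * m ^ k \<le> norm ((f ^^ k) (a *\<^sub>R v + a *\<^sub>R w))"
    using norm_scaleR_add_ge[OF unstable(2) stable(2), of "a * l ^ k" "a * m ^ k"]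
      assms(1) unstable(3) stable(3)
    by (simp add: funpow_saddle)
  ultimately have "a * l ^ k \<le> 1 + norm ((f ^^ k) (a *\<^sub>R v + a *\<^sub>R w))"
    by linarith
  moreover have "0 < a * l ^ k"
    using assms(1) unstable(3) by simp
  ultimately have "decay_weight p ((f ^^ k) (a *\<^sub>R v + a *\<^sub>R w)) \<le> 1 / (a * l ^ k) ^ p"
    unfolding decay_weight_def by (intro divide_left_mono power_mono mult_pos_pos) auto
  also have "\<dots> = 1 / a ^ p * (1 / l ^ p) ^ k"
    by (simp add: power_mult_distrib power_divide flip: power_mult mult.commute)
  finally show ?thesis .
qed

text \<open>With \<open>l^p\<close> above the reciprocal of a lower norm bound \<open>B\<close> of \<open>f\<close>, the weight decays along
  the forward orbit of \<open>a v + a w\<close> faster than \<open>B^k\<close>, so an error bounded by it must vanish.\<close>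
lemma saddle_decay_weight_forces_orbit:
  obtains p where "\<And>a u. 0 < a \<Longrightarrow> a \<le> 1 \<Longrightarrow>
    (\<And>k. norm ((f ^^ k) u) < decay_weight p ((f ^^ k) (a *\<^sub>R v + a *\<^sub>R w))) \<Longrightarrow> u = 0"
proof -
  obtain B where B: "0 < B" "\<And>x. B * norm x \<le> norm (f x)"
    using linear_inj_bounded_below_pos[OF lin inj] by blast
  obtain p where p: "1 / B < l ^ p"
    using real_arch_pow[OF unstable(3)] by blast
  have "u = 0" if a: "0 < a" "a \<le> 1"
    and u: "\<And>k. norm ((f ^^ k) u) < decay_weight p ((f ^^ k) (a *\<^sub>R v + a *\<^sub>R w))" for a u
  proof (rule eq_0_if_orbit_decays_faster[OF B(2)])
    show "0 \<le> 1 / l ^ p"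
      using unstable(3) by simp
    show "1 / l ^ p < B"
      using p B(1) unstable(3) by (simp add: divide_less_eq mult.commute)
    show "norm ((f ^^ k) u) \<le> 1 / a ^ p * (1 / l ^ p) ^ k" for k
      using u[of k] decay_weight_funpow_saddle_le[OF a, of p k] by linarith
  qed
  then show thesis
    using that by blast
qed

lemma inv_funpow_saddle_escapes:
  assumes "0 < a"
  obtains j where "1 \<le> norm ((inv f ^^ Suc j) (a *\<^sub>R v + a *\<^sub>R w))"
proof -
  have m_inv: "1 < 1 / m"
    using stable(3,4) by simp
  obtain j where j: "(1 + a) / a < (1 / m) ^ j"
    using real_arch_pow[OF m_inv] by blast
  have "1 + a < a * (1 / m) ^ j"
    using j assms by (simp add: divide_less_eq mult.commute)
  also have "\<dots> \<le> a * (1 / m) ^ Suc j"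
    using m_inv assms by (intro mult_left_mono power_increasing) auto
  also have "\<dots> = a / m ^ Suc j"
    by (simp add: power_one_over)
  finally have "1 + a < a / m ^ Suc j" .
  moreover have "a / l ^ Suc j \<le> a"
  proof -
    have "1 \<le> l ^ Suc j"
      using unstable(3) by (intro one_le_power) simp
    then show ?thesis
      using assms by (simp add: divide_le_eq)
  qed
  moreover have "a / m ^ Suc j - a / l ^ Suc j \<le> norm ((inv f ^^ Suc j) (a *\<^sub>R v + a *\<^sub>R w))"
    using norm_scaleR_add_ge[OF stable(2) unstable(2), of "a / m ^ Suc j" "a / l ^ Suc j"]
      assms unstable(3) stable(3)
    by (simp add: inv_funpow_saddle add.commute del: funpow.simps)
  ultimately show thesis
    using that[of j] by linarith
qed

lemma saddle_splice_orbits_not_shadowed: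
  obtains p where "\<And>a. 0 < a \<Longrightarrow> a \<le> 1 \<Longrightarrow>
    \<not> shadowed f (decay_weight p) (splice_orbit f 0 (a *\<^sub>R v + a *\<^sub>R w))"
proof -
  obtain p where forces_orbit: "\<And>a u. 0 < a \<Longrightarrow> a \<le> 1 \<Longrightarrow>
    (\<And>k. norm ((f ^^ k) u) < decay_weight p ((f ^^ k) (a *\<^sub>R v + a *\<^sub>R w))) \<Longrightarrow> u = 0"
    using saddle_decay_weight_forces_orbit by blast
  have "\<not> shadowed f (decay_weight p) (splice_orbit f 0 e)"
    if a: "0 < a" "a \<le> 1" and e: "e = a *\<^sub>R v + a *\<^sub>R w" for a e
  proof
    assume "shadowed f (decay_weight p) (splice_orbit f 0 e)"
    then obtain y where forward: "\<And>k. dist ((f ^^ k) (f y)) ((f ^^ k) e) < decay_weight p ((f ^^ k) e)"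
      and backward: "\<And>j. dist ((inv f ^^ j) y) 0 < decay_weight p (0 :: 'a)"
      by (rule shadowing_point_of_splice_orbit) (rule that)
    have "norm ((f ^^ k) (f y - e)) < decay_weight p ((f ^^ k) (a *\<^sub>R v + a *\<^sub>R w))" for k
      using forward[of k] by (simp add: e dist_norm linear_diff[OF linear_funpow[OF lin]])
    then have "f y - e = 0"
      by (rule forces_orbit[OF a])
    then have "inv f e = y"
      using inv_f_f[OF inj, of y] by simp
    then have "(inv f ^^ j) y = (inv f ^^ Suc j) e" for j
      by (simp only: funpow_Suc_right comp_apply)
    then have "norm ((inv f ^^ Suc j) e) < 1" for j
      using backward[of j] by (simp only: dist_norm diff_zero decay_weight_0)
    moreover obtain j where "1 \<le> norm ((inv f ^^ Suc j) e)"
      unfolding e by (rule inv_funpow_saddle_escapes[OF a(1)])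
    ultimately show False
      by (meson not_le)
  qed
  then show thesis
    using that by blast
qed

end

theorem mainTheorem5:
  fixes f :: "real ^ 'n \<Rightarrow> real ^ 'n" and l m :: real
  assumes "linear f" and "bij f"
    and "\<exists>v. v \<noteq> 0 \<and> f v = l *\<^sub>R v" and "l > 1"
    and "\<exists>w. w \<noteq> 0 \<and> f w = m *\<^sub>R w" and "0 < m" and "m < 1"
  shows "\<not> topological_shadowing f"
proof
  assume "topological_shadowing f"
  obtain v where v: "norm v = 1" "f v = l *\<^sub>R v"
    using assms(3) unit_eigenvector[OF assms(1)] by blast
  obtain w where w: "norm w = 1" "f w = m *\<^sub>R w"
    using assms(5) unit_eigenvector[OF assms(1)] by blast
  obtain p where not_shadowed: "\<And>a. 0 < a \<Longrightarrow> a \<le> 1 \<Longrightarrow>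
    \<not> shadowed f (decay_weight p) (splice_orbit f 0 (a *\<^sub>R v + a *\<^sub>R w))"
    using saddle_splice_orbits_not_shadowed[OF assms(1) bij_is_inj[OF assms(2)] v(2,1) assms(4)
        w(2,1) assms(6,7)]
    by blast
  obtain \<delta> where \<delta>: "pos_cont \<delta>" "\<And>x. pseudo_orbit f \<delta> x \<Longrightarrow> shadowed f (decay_weight p) x"
    using \<open>topological_shadowing f\<close> pos_cont_decay_weight
    unfolding topological_shadowing_def by blast
  define a where "a = min (\<delta> 0 / 4) 1"
  have a: "0 < a" "a \<le> 1" "2 * a < \<delta> 0"
    using \<delta>(1) by (auto simp: a_def pos_cont_def min_def)
  have "norm (a *\<^sub>R v + a *\<^sub>R w) \<le> 2 * a"
    using norm_triangle_ineq[of "a *\<^sub>R v" "a *\<^sub>R w"] a v w by simp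
  then have "pseudo_orbit f \<delta> (splice_orbit f 0 (a *\<^sub>R v + a *\<^sub>R w))"
    using \<delta>(1) a(3) by (intro pseudo_orbit_splice_orbit) (auto simp: pos_cont_def linear_0[OF assms(1)])
  then show False
    using \<delta>(2) not_shadowed[OF a(1,2)] by blast
qed

end
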